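(* If $\Gamma\rhd_{\diamond} \Delta$ then $\mathrm{var}(\Gamma')=\mathrm{var}(\Delta')$ for some $\Gamma'\subseteq \Gamma$, $\Delta'\subseteq \Delta$.
   Context: A $\Sigma$-Nmatrix $\mathbb{M}=\langle V,\cdot_{\mathbb{M}},D\rangle$ has truth-values $V$, designated values $D\subseteq V$, and interprets each $n$-ary connective as a multi-function $V^n\to\wp(V)\setminus\emptyset$. An $\mathbb{M}$-valuation is a map $v$ from formulas to $V$ with $v(\copyright(\varphi_1,\ldots,\varphi_k))\in\copyright_{\mathbb{M}}(v(\varphi_1),\ldots,v(\varphi_k))$. The (multiple-conclusion, Scottian) logic $\rhd_{\mathbb{M}}$ is defined by $\Gamma\rhd_{\mathbb{M}}\Delta$ iff every $\mathbb{M}$-valuation with $v(\Gamma)\subseteq D$ has $v(\Delta)\cap D\neq\emptyset$. Let $\Sigma_\diamond$ contain a single binary connective $\diamond$ (platypus), and let $\mathbb{B}_\diamond=\langle\{0,1\},\cdot,\{1\}\rangle$ interpret it by $\diamond(0,0)=\{0\}$, $\diamond(1,1)=\{1\}$, $\diamond(0,1)=\diamond(1,0)=\{0,1\}$ (i.e. $\diamond(x,y)=\{x\land y,x\lor y\}$). $\rhd_\diamond$ denotes $\rhd_{\mathbb{B}_\diamond}$, and $\mathrm{var}(\Gamma)$ is the set of propositional variables occurring in $\Gamma$. *)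

theory Defs
  imports Main
begin

text \<open>Formulas over the signature with a single binary connective (platypus).\<close>
datatype 'v fm = Var 'v | Dia "'v fm" "'v fm"

primrec vars :: "'v fm \<Rightarrow> 'v set" where
  "vars (Var p) = {p}"
| "vars (Dia a b) = vars a \<union> vars b"

definition varset :: "'v fm set \<Rightarrow> 'v set" where
  "varset \<Gamma> = (\<Union>\<phi>\<in>\<Gamma>. vars \<phi>)"

text \<open>The Nmatrix B_dia: values {0,1} (as bool), designated {1} (True).\<close>
definition dia_B :: "bool \<Rightarrow> bool \<Rightarrow> bool set" where
  "dia_B x y = {x \<and> y, x \<or> y}"

definition designated :: "bool set" where
  "designated = {True}"

definition is_valuation :: "('v fm \<Rightarrow> bool) \<Rightarrow> bool" where
  "is_valuation v \<longleftrightarrow> (\<forall>a b. v (Dia a b) \<in> dia_B (v a) (v b))"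

definition cons_dia :: "'v fm set \<Rightarrow> 'v fm set \<Rightarrow> bool" where
  "cons_dia \<Gamma> \<Delta> \<longleftrightarrow>
     (\<forall>v. is_valuation v \<longrightarrow> v ` \<Gamma> \<subseteq> designated \<longrightarrow> v ` \<Delta> \<inter> designated \<noteq> {})"

end

(*
  Write G_\<Phi>(X) for the variables of those formulas of \<Phi> all of whose variables lie in X.
  A nonempty X with X \<subseteq> G_\<Gamma>(G_\<Delta>(X)) satisfies G_\<Gamma>(X) = X = G_\<Delta>(X), so the formulas of
  \<Gamma> and of \<Delta> inside X have exactly the variables X. If there is no such X, iterate the
  deflationary map f = G_\<Gamma> \<circ> G_\<Delta> transfinitely from the set of all variables; the
  iterates form a well-ordered descending chain that never stalls at a nonempty set.
  The rank r(\<phi>) of a formula is the smallest iterate containing vars \<phi>, and the valuation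
  "v \<phi> iff vars \<phi> \<not>\<subseteq> G_\<Delta>(r(\<phi>))" refutes every formula of \<Delta> and validates every formula
  of \<Gamma>. It respects the platypus: Dia a b gets the larger rank, and if the ranks of a and b
  differ, the variables of the lower-ranked argument lie in f of the higher rank, so that
  v (Dia a b) is the value of the higher-ranked argument.
*)
theory Submission
  imports Defs "HOL-Library.Bourbaki_Witt_Fixpoint"
begin

lemma vars_nonempty: "vars \<phi> \<noteq> {}"
  by (induction \<phi>) auto

lemma dia_B_eq: "dia_B x y = {x, y}"
  unfolding dia_B_def by auto

locale deflationary_set_operator =
  fixes f :: "'a set \<Rightarrow> 'a set"
  assumes deflationary: "f X \<subseteq> X"

text \<open>The transfinite iterates of f from UNIV are the Bourbaki-Witt iterates for the
  reversed inclusion order, in which chains have their intersection as least upper bound.\<close>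

sublocale deflationary_set_operator \<subseteq> bourbaki_witt_fixpoint Inter "{(X, Y). Y \<subseteq> X}" f
  by unfold_locales (auto simp: order_on_defs Field_def deflationary intro: refl_onI transI antisymI)

context deflationary_set_operator
begin

abbreviation tower :: "'a set set" where
  "tower \<equiv> iterates_above UNIV"

lemma Field_superset: "X \<in> Field {(X, Y). Y \<subseteq> X}"
  unfolding Field_def by blast

lemma tower_subset_or_subset_step:
  assumes "X \<in> tower" "Y \<in> tower"
  shows "X \<subseteq> Y \<or> Y \<subseteq> f X"
proof -
  have "X \<in> iterates_above Y \<or> Y \<in> iterates_above X"
    using iterates_above_triangle[OF assms Field_superset] .
  then show ?thesis
  proof
    assume "X \<in> iterates_above Y"
    then show ?thesis using iterates_above_ge[OF _ Field_superset] by blast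
  next
    assume "Y \<in> iterates_above X"
    then have "Y = X \<or> Y \<in> iterates_above (f X)"
      using iterates_above_successor[OF _ Field_superset] by blast
    then show ?thesis using iterates_above_ge[OF _ Field_superset] by blast
  qed
qed

definition tower_hull :: "'a set \<Rightarrow> 'a set" where
  "tower_hull S = \<Inter>{X \<in> tower. S \<subseteq> X}"

lemma tower_hull_in_tower: "tower_hull S \<in> tower"
  unfolding tower_hull_def
proof (rule Sup)
  show "{X \<in> tower. S \<subseteq> X} \<in> Chains {(X, Y). Y \<subseteq> X}"
    using chain_iterates_above[OF Field_superset] by (rule in_Chains_subset) blast
  show "{X \<in> tower. S \<subseteq> X} \<noteq> {}"
    using base by blast
qed blast

lemma subset_tower_hull: "S \<subseteq> tower_hull S"
  unfolding tower_hull_def by blast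

lemma tower_hull_least: "X \<in> tower \<Longrightarrow> S \<subseteq> X \<Longrightarrow> tower_hull S \<subseteq> X"
  unfolding tower_hull_def by blast

lemma tower_hull_Un:
  assumes "tower_hull B \<subseteq> tower_hull A"
  shows "tower_hull (A \<union> B) = tower_hull A"
proof
  show "tower_hull (A \<union> B) \<subseteq> tower_hull A"
    using assms subset_tower_hull[of A] subset_tower_hull[of B]
    by (intro tower_hull_least tower_hull_in_tower) blast
  show "tower_hull A \<subseteq> tower_hull (A \<union> B)"
    using subset_tower_hull[of "A \<union> B"] by (intro tower_hull_least tower_hull_in_tower) blast
qed

lemma not_subset_step_tower_hull:
  assumes no_post_fixpoint: "\<And>X. X \<subseteq> f X \<Longrightarrow> X = {}" and "S \<noteq> {}"
  shows "\<not> S \<subseteq> f (tower_hull S)"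
proof
  assume "S \<subseteq> f (tower_hull S)"
  then have "tower_hull S \<subseteq> f (tower_hull S)"
    using tower_hull_in_tower by (intro tower_hull_least step)
  then show False
    using no_post_fixpoint subset_tower_hull[of S] \<open>S \<noteq> {}\<close> by blast
qed

lemma is_valuation_tower_rank:
  assumes step_le: "\<And>X. f X \<subseteq> g X"
  shows "is_valuation (\<lambda>\<phi>. \<not> vars \<phi> \<subseteq> g (tower_hull (vars \<phi>)))" (is "is_valuation ?v")
proof -
  let ?r = "\<lambda>\<phi>. tower_hull (vars \<phi>)"
  have Dia_cases: "?v (Dia a b) \<in> {?v a, ?v b}" if ba: "?r b \<subseteq> ?r a" for a b
  proof -
    have r_Dia: "?r (Dia a b) = ?r a"
      using tower_hull_Un[OF ba] by simp
    consider "?r a \<subseteq> ?r b" | "?r b \<subseteq> f (?r a)"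
      using tower_subset_or_subset_step[OF tower_hull_in_tower tower_hull_in_tower] by blast
    then show ?thesis
    proof cases
      case 1
      then have "?r (Dia a b) = ?r b" using ba r_Dia by simp
      then show ?thesis using r_Dia by auto
    next
      case 2
      then have "vars b \<subseteq> g (?r a)"
        using subset_tower_hull[of "vars b"] step_le by blast
      then show ?thesis using r_Dia by auto
    qed
  qed
  show ?thesis
    unfolding is_valuation_def dia_B_eq
  proof (intro allI)
    fix a b
    have "?r b \<subseteq> ?r a \<or> ?r a \<subseteq> ?r b"
      using tower_subset_or_subset_step[OF tower_hull_in_tower tower_hull_in_tower] deflationary by blast
    moreover have "?v (Dia b a) = ?v (Dia a b)"
      by (simp add: Un_commute)
    ultimately show "?v (Dia a b) \<in> {?v a, ?v b}"
      using Dia_cases[of a b] Dia_cases[of b a] by auto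
  qed
qed

end

definition vars_within :: "'v fm set \<Rightarrow> 'v set \<Rightarrow> 'v set" where
  "vars_within \<Phi> X = varset {\<phi> \<in> \<Phi>. vars \<phi> \<subseteq> X}"

lemma vars_within_subset: "vars_within \<Phi> X \<subseteq> X"
  unfolding vars_within_def varset_def by auto

lemma vars_within_mono: "X \<subseteq> Y \<Longrightarrow> vars_within \<Phi> X \<subseteq> vars_within \<Phi> Y"
  unfolding vars_within_def varset_def by auto

lemma vars_subset_vars_within: "\<phi> \<in> \<Phi> \<Longrightarrow> vars \<phi> \<subseteq> X \<Longrightarrow> vars \<phi> \<subseteq> vars_within \<Phi> X"
  unfolding vars_within_def varset_def by auto

lemma post_fixpoint_vars_within:
  assumes post: "X \<subseteq> vars_within \<Gamma> (vars_within \<Delta> X)"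
  shows "vars_within \<Gamma> X = X" "vars_within \<Delta> X = X"
proof -
  have "X \<subseteq> vars_within \<Gamma> X"
    using post vars_within_mono[OF vars_within_subset] by (rule order_trans)
  then show "vars_within \<Gamma> X = X"
    by (rule subset_antisym[OF vars_within_subset])
  have "X \<subseteq> vars_within \<Delta> X"
    using post vars_within_subset by (rule order_trans)
  then show "vars_within \<Delta> X = X"
    by (rule subset_antisym[OF vars_within_subset])
qed

lemma cons_dia_obtains_post_fixpoint:
  assumes "cons_dia \<Gamma> \<Delta>"
  obtains X where "X \<subseteq> vars_within \<Gamma> (vars_within \<Delta> X)" "X \<noteq> {}"
proof (rule ccontr)
  assume "\<not> thesis"
  with that have no_post_fixpoint: "\<And>X. X \<subseteq> vars_within \<Gamma> (vars_within \<Delta> X) \<Longrightarrow> X = {}"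
    by blast
  interpret deflationary_set_operator "\<lambda>X. vars_within \<Gamma> (vars_within \<Delta> X)"
    using vars_within_subset by unfold_locales (rule order_trans)
  define v where "v = (\<lambda>\<phi>. \<not> vars \<phi> \<subseteq> vars_within \<Delta> (tower_hull (vars \<phi>)))"
  have "is_valuation v"
    unfolding v_def using vars_within_subset by (rule is_valuation_tower_rank[of "vars_within \<Delta>"])
  moreover have "v \<gamma>" if "\<gamma> \<in> \<Gamma>" for \<gamma>
  proof -
    have "\<not> vars \<gamma> \<subseteq> vars_within \<Gamma> (vars_within \<Delta> (tower_hull (vars \<gamma>)))"
      using no_post_fixpoint vars_nonempty by (rule not_subset_step_tower_hull)
    then show ?thesis
      using vars_subset_vars_within[OF that] unfolding v_def by blast
  qed
  moreover have "\<not> v \<delta>" if "\<delta> \<in> \<Delta>" for \<delta>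
    using vars_subset_vars_within[OF that subset_tower_hull] unfolding v_def by simp
  ultimately show False
    using assms unfolding cons_dia_def designated_def by blast
qed

theorem proposition2:
  fixes \<Gamma> \<Delta> :: "'v fm set"
  assumes "cons_dia \<Gamma> \<Delta>"
  shows "\<exists>\<Gamma>' \<Delta>'. \<Gamma>' \<subseteq> \<Gamma> \<and> \<Delta>' \<subseteq> \<Delta> \<and> \<Gamma>' \<noteq> {} \<and> \<Delta>' \<noteq> {}
                 \<and> varset \<Gamma>' = varset \<Delta>'"
proof -
  obtain X where post: "X \<subseteq> vars_within \<Gamma> (vars_within \<Delta> X)" and "X \<noteq> {}"
    using cons_dia_obtains_post_fixpoint[OF assms] .
  let ?\<Gamma>' = "{\<gamma> \<in> \<Gamma>. vars \<gamma> \<subseteq> X}" and ?\<Delta>' = "{\<delta> \<in> \<Delta>. vars \<delta> \<subseteq> X}"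
  have "varset ?\<Gamma>' = X" "varset ?\<Delta>' = X"
    using post_fixpoint_vars_within[OF post] unfolding vars_within_def .
  with \<open>X \<noteq> {}\<close> have "?\<Gamma>' \<noteq> {}" "?\<Delta>' \<noteq> {}"
    unfolding varset_def by auto
  with \<open>varset ?\<Gamma>' = X\<close> \<open>varset ?\<Delta>' = X\<close> show ?thesis
    by (intro exI[of _ ?\<Gamma>'] exI[of _ ?\<Delta>']) auto
qed

end
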